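(* Let $c\in[\frac12,1)$ and let $d,\delta$ be positive integers with $d\ge\delta$. Let $G$ be a graph with maximum degree $\delta$ and $w:V(G)\to[0,1]$ a weight function with $w(V(G))=1$, and assume $G$ has no $d$-bounded $(w,c)$-balanced separator. Then for every $v\in V(G)$ the canonical star separation for $v$ is unique (i.e. $G\setminus N[v]$ has a unique connected component of largest weight).
   Context: For $X\subseteq V(G)$, $w(X)=\sum_{x\in X}w(x)$; $N(v)$ is the neighborhood of $v$, $N[v]=N(v)\cup\{v\}$; $N^d[v]$ is the set of vertices at distance at most $d$ from $v$. A set $X$ is $d$-bounded if $X\subseteq N^d[v]$ for some $v\in V(G)$. A set $X\subseteq V(G)$ is a $(w,c)$-balanced separator if every connected component $D$ of $G\setminus X$ satisfies $w(D)\le c$. A canonical star separation for $v$ is a triple $S_v=(A_v,C_v,B_v)$ where $B_v$ is a largest-weight connected component of $G\setminus N[v]$, $C_v$ consists of $v$ together with every vertex of $N(v)$ having a neighbor in $B_v$, and $A_v=V(G)\setminus(B_v\cup C_v)$. *)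

theory Defs
  imports Complex_Main
begin

definition graph :: "'a set \<Rightarrow> ('a \<Rightarrow> 'a \<Rightarrow> bool) \<Rightarrow> bool" where
  "graph V E \<longleftrightarrow> finite V \<and> (\<forall>x y. E x y \<longrightarrow> E y x)
      \<and> (\<forall>x. \<not> E x x) \<and> (\<forall>x y. E x y \<longrightarrow> x \<in> V \<and> y \<in> V)"

definition nbhd :: "'a set \<Rightarrow> ('a \<Rightarrow> 'a \<Rightarrow> bool) \<Rightarrow> 'a \<Rightarrow> 'a set" where
  "nbhd V E v = {u \<in> V. E v u}"

definition closed_nbhd :: "'a set \<Rightarrow> ('a \<Rightarrow> 'a \<Rightarrow> bool) \<Rightarrow> 'a \<Rightarrow> 'a set" where
  "closed_nbhd V E v = insert v (nbhd V E v)"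

definition max_degree :: "'a set \<Rightarrow> ('a \<Rightarrow> 'a \<Rightarrow> bool) \<Rightarrow> nat" where
  "max_degree V E = Max ((\<lambda>v. card (nbhd V E v)) ` V)"

definition edges_in :: "('a \<Rightarrow> 'a \<Rightarrow> bool) \<Rightarrow> 'a set \<Rightarrow> ('a \<times> 'a) set" where
  "edges_in E S = {(x, y). x \<in> S \<and> y \<in> S \<and> E x y}"

definition components :: "('a \<Rightarrow> 'a \<Rightarrow> bool) \<Rightarrow> 'a set \<Rightarrow> 'a set set" where
  "components E S = {{y. (x, y) \<in> (edges_in E S)\<^sup>*} \<union> {x} | x. x \<in> S}"

definition ball_d :: "'a set \<Rightarrow> ('a \<Rightarrow> 'a \<Rightarrow> bool) \<Rightarrow> 'a \<Rightarrow> nat \<Rightarrow> 'a set" where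
  "ball_d V E v d = {u \<in> V. \<exists>k \<le> d. (v, u) \<in> (edges_in E V) ^^ k}"

definition d_bounded :: "'a set \<Rightarrow> ('a \<Rightarrow> 'a \<Rightarrow> bool) \<Rightarrow> nat \<Rightarrow> 'a set \<Rightarrow> bool" where
  "d_bounded V E d X \<longleftrightarrow> (\<exists>v \<in> V. X \<subseteq> ball_d V E v d)"

definition balanced_separator ::
  "'a set \<Rightarrow> ('a \<Rightarrow> 'a \<Rightarrow> bool) \<Rightarrow> ('a \<Rightarrow> real) \<Rightarrow> real \<Rightarrow> 'a set \<Rightarrow> bool" where
  "balanced_separator V E w c X \<longleftrightarrow> X \<subseteq> V \<and>
     (\<forall>D \<in> components E (V - X). sum w D \<le> c)"

end

theory Submission
  imports Defs
begin

text \<open>The closed neighbourhood \<open>N[v]\<close> is \<open>1\<close>-bounded, hence \<open>d\<close>-bounded, so it is not a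
  \<open>(w,c)\<close>-balanced separator: some component \<open>B\<close> of \<open>G \<setminus> N[v]\<close> has
  \<open>w(B) > c \<ge> 1/2\<close>. Distinct components are disjoint, so every other component weighs at
  most \<open>1 - w(B) < w(B)\<close>, and \<open>B\<close> is the unique component of largest weight.\<close>

lemma components_subset:
  assumes "C \<in> components E S"
  shows "C \<subseteq> S"
proof -
  obtain x where x: "x \<in> S" "C = {y. (x, y) \<in> (edges_in E S)\<^sup>*} \<union> {x}"
    using assms unfolding components_def by blast
  have "y \<in> S" if "(x, y) \<in> (edges_in E S)\<^sup>*" for y
    using that x(1) by (induction rule: rtrancl_induct) (auto simp: edges_in_def)
  then show ?thesis using x by auto
qed

lemma components_disjoint:
  assumes sym: "\<forall>x y. E x y \<longrightarrow> E y x"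
    and "C \<in> components E S" "D \<in> components E S" "C \<noteq> D"
  shows "C \<inter> D = {}"
proof (rule ccontr)
  let ?R = "edges_in E S"
  have "?R\<inverse> = ?R" using sym unfolding edges_in_def by auto
  then have reach_sym: "(a, b) \<in> ?R\<^sup>*" if "(b, a) \<in> ?R\<^sup>*" for a b
    using that by (metis rtrancl_converseI)
  obtain x where x: "C = {y. (x, y) \<in> ?R\<^sup>*}"
    using assms(2) unfolding components_def by auto
  obtain x' where x': "D = {y. (x', y) \<in> ?R\<^sup>*}"
    using assms(3) unfolding components_def by auto
  assume "C \<inter> D \<noteq> {}"
  then obtain z where "(x, z) \<in> ?R\<^sup>*" "(x', z) \<in> ?R\<^sup>*" using x x' by auto
  then have "(x, x') \<in> ?R\<^sup>*" "(x', x) \<in> ?R\<^sup>*"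
    using reach_sym by (meson rtrancl_trans)+
  then have "C = D" unfolding x x' by (auto intro: rtrancl_trans)
  with assms(4) show False by simp
qed

lemma sum_two_components_le:
  fixes w :: "'a \<Rightarrow> real"
  assumes "graph V E" and "\<forall>v \<in> V. 0 \<le> w v" and "S \<subseteq> V"
    and A: "A \<in> components E S" and B: "B \<in> components E S" and "A \<noteq> B"
  shows "sum w A + sum w B \<le> sum w V"
proof -
  have fin: "finite V" and sym: "\<forall>x y. E x y \<longrightarrow> E y x"
    using assms(1) unfolding graph_def by auto
  have sub: "A \<subseteq> V" "B \<subseteq> V"
    using components_subset[OF A] components_subset[OF B] \<open>S \<subseteq> V\<close> by auto
  have "sum w A + sum w B = sum w (A \<union> B)"
    using components_disjoint[OF sym A B \<open>A \<noteq> B\<close>] sub fin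
    by (simp add: sum.union_disjoint finite_subset)
  also have "\<dots> \<le> sum w V"
    using sub fin assms(2) by (intro sum_mono2) auto
  finally show ?thesis .
qed

lemma closed_nbhd_subset:
  assumes "v \<in> V"
  shows "closed_nbhd V E v \<subseteq> V"
  using assms unfolding closed_nbhd_def nbhd_def by auto

lemma closed_nbhd_subset_ball_d:
  assumes "v \<in> V" and "0 < d"
  shows "closed_nbhd V E v \<subseteq> ball_d V E v d"
proof
  fix u assume u: "u \<in> closed_nbhd V E v"
  show "u \<in> ball_d V E v d"
  proof (cases "u = v")
    case True
    then show ?thesis using \<open>v \<in> V\<close> unfolding ball_d_def by (intro CollectI conjI exI[of _ 0]) auto
  next
    case False
    then have "u \<in> V" "E v u" using u unfolding closed_nbhd_def nbhd_def by auto
    then show ?thesis using assms unfolding ball_d_def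
      by (intro CollectI conjI exI[of _ 1]) (auto simp: edges_in_def)
  qed
qed

lemma d_bounded_closed_nbhd:
  assumes "v \<in> V" and "0 < d"
  shows "d_bounded V E d (closed_nbhd V E v)"
  using closed_nbhd_subset_ball_d[OF assms] \<open>v \<in> V\<close> unfolding d_bounded_def by blast

lemma ex1_maximizer_if_strict_max:
  fixes f :: "'b \<Rightarrow> 'c::linorder"
  assumes "D \<in> \<C>" and "\<And>A. A \<in> \<C> \<Longrightarrow> A \<noteq> D \<Longrightarrow> f A < f D"
  shows "\<exists>!B. B \<in> \<C> \<and> (\<forall>A \<in> \<C>. f A \<le> f B)"
proof (rule ex1I[of _ D])
  show "D \<in> \<C> \<and> (\<forall>A \<in> \<C>. f A \<le> f D)"
    using assms by (metis order.order_iff_strict)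
next
  fix B assume "B \<in> \<C> \<and> (\<forall>A \<in> \<C>. f A \<le> f B)"
  then show "B = D" using assms by (metis leD)
qed

theorem lemma4p1:
  fixes V :: "'a set" and E :: "'a \<Rightarrow> 'a \<Rightarrow> bool" and w :: "'a \<Rightarrow> real"
    and c :: real and d \<delta> :: nat
  assumes "1/2 \<le> c" and "c < 1"
    and "0 < d" and "0 < \<delta>" and "\<delta> \<le> d"
    and "graph V E"
    and "max_degree V E = \<delta>"
    and "\<forall>v \<in> V. 0 \<le> w v \<and> w v \<le> 1"
    and "sum w V = 1"
    and "\<not> (\<exists>X. d_bounded V E d X \<and> balanced_separator V E w c X)"
  shows "\<forall>v \<in> V. \<exists>!B. B \<in> components E (V - closed_nbhd V E v) \<and>
           (\<forall>D \<in> components E (V - closed_nbhd V E v). sum w D \<le> sum w B)"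
proof
  fix v assume "v \<in> V"
  let ?C = "components E (V - closed_nbhd V E v)"
  have "\<not> balanced_separator V E w c (closed_nbhd V E v)"
    using d_bounded_closed_nbhd[OF \<open>v \<in> V\<close> \<open>0 < d\<close>] assms(10) by blast
  then obtain D where D: "D \<in> ?C" "c < sum w D"
    using closed_nbhd_subset[OF \<open>v \<in> V\<close>] unfolding balanced_separator_def by (auto simp: not_le)
  have "sum w A < sum w D" if "A \<in> ?C" "A \<noteq> D" for A
  proof -
    have "\<forall>v \<in> V. 0 \<le> w v" using assms(8) by blast
    from sum_two_components_le[OF assms(6) this Diff_subset that(1) D(1) that(2)]
    have "sum w A + sum w D \<le> 1" using assms(9) by simp
    with D(2) \<open>1/2 \<le> c\<close> show ?thesis by linarith
  qed
  then show "\<exists>!B. B \<in> ?C \<and> (\<forall>A \<in> ?C. sum w A \<le> sum w B)"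
    by (rule ex1_maximizer_if_strict_max[OF D(1)])
qed

end
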